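(* Let $K$ be a totally real number field of degree $n$. Suppose an integer plane $A\subseteq\mathbb{R}^n$ is contained in the hyperplane $\{x\in\mathbb{R}^n:\sum_{i=1}^n\tau_i(\delta)x_i=k\}$ for some $\delta\in\mathcal{O}_K^\vee$ and some $k>0$. Then $\mathrm{ID}(A)$ is a divisor of $k$. In particular, if $A$ is contained in such a hyperplane with $k=1$, then $\mathrm{ID}(A)=1$.
   Context: $\tau_1,\dots,\tau_n$ are the real embeddings of $K$; the Minkowski embedding is $\iota_M:K\to\mathbb{R}^n$, $\alpha\mapsto(\tau_1(\alpha),\dots,\tau_n(\alpha))$, and $\Lambda=\iota_M(\mathcal{O}_K)$. The codifferent is $\mathcal{O}_K^\vee=\{\delta\in K:\operatorname{Tr}_{K/\mathbb{Q}}(\delta\alpha)\in\mathbb{Z}\ \forall\alpha\in\mathcal{O}_K\}$. An integer plane is an affine subspace $A\subseteq\mathbb{R}^n$ such that $A\cap\Lambda$ spans (affinely) a lattice of rank equal to $\dim A$. For an integer plane $A$ not containing the origin, its integer distance $\mathrm{ID}(A)$ is the index of the subgroup generated by $A\cap\Lambda$ in the lattice $\Lambda\cap\operatorname{Span}_{\mathbb{R}}(A)$. *)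

theory Defs
  imports "HOL-Analysis.Analysis" "HOL-Computational_Algebra.Polynomial"
begin

text \<open>A number field K is represented as a subfield of the reals (possible since K is
  totally real; this amounts to fixing one real embedding).\<close>

definition subfield_real :: "real set \<Rightarrow> bool" where
  "subfield_real K \<longleftrightarrow> 0 \<in> K \<and> 1 \<in> K \<and> (\<forall>x\<in>K. \<forall>y\<in>K. x + y \<in> K \<and> x * y \<in> K)
     \<and> (\<forall>x\<in>K. - x \<in> K) \<and> (\<forall>x\<in>K. x \<noteq> 0 \<longrightarrow> inverse x \<in> K)"

definition degree_over_Q :: "real set \<Rightarrow> nat \<Rightarrow> bool" where
  "degree_over_Q K n \<longleftrightarrow> (\<exists>b :: nat \<Rightarrow> real. (\<forall>i<n. b i \<in> K)
     \<and> (\<forall>x\<in>K. \<exists>c. (\<forall>i<n. c i \<in> \<rat>) \<and> x = (\<Sum>i<n. c i * b i))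
     \<and> (\<forall>c. (\<forall>i<n. c i \<in> \<rat>) \<and> (\<Sum>i<n. c i * b i) = 0 \<longrightarrow> (\<forall>i<n. c i = 0)))"

definition number_field :: "real set \<Rightarrow> nat \<Rightarrow> bool" where
  "number_field K n \<longleftrightarrow> subfield_real K \<and> degree_over_Q K n"

definition field_embedding :: "real set \<Rightarrow> (real \<Rightarrow> 'b::field) \<Rightarrow> bool" where
  "field_embedding K \<sigma> \<longleftrightarrow> \<sigma> 1 = 1 \<and>
     (\<forall>x\<in>K. \<forall>y\<in>K. \<sigma> (x + y) = \<sigma> x + \<sigma> y \<and> \<sigma> (x * y) = \<sigma> x * \<sigma> y)"

definition totally_real :: "real set \<Rightarrow> bool" where
  "totally_real K \<longleftrightarrow> (\<forall>\<sigma> :: real \<Rightarrow> complex. field_embedding K \<sigma> \<longrightarrow> (\<forall>x\<in>K. \<sigma> x \<in> \<real>))"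

definition real_embeddings_enum :: "real set \<Rightarrow> ('n \<Rightarrow> real \<Rightarrow> real) \<Rightarrow> bool" where
  "real_embeddings_enum K \<tau> \<longleftrightarrow> (\<forall>i. field_embedding K (\<tau> i))
     \<and> (\<forall>i j. (\<forall>x\<in>K. \<tau> i x = \<tau> j x) \<longrightarrow> i = j)
     \<and> (\<forall>\<sigma> :: real \<Rightarrow> real. field_embedding K \<sigma> \<longrightarrow> (\<exists>i. \<forall>x\<in>K. \<sigma> x = \<tau> i x))"

definition algebraic_integer :: "real \<Rightarrow> bool" where
  "algebraic_integer x \<longleftrightarrow> (\<exists>p :: int poly. lead_coeff p = 1 \<and> poly (map_poly of_int p) x = 0)"

definition ring_of_integers :: "real set \<Rightarrow> real set" where
  "ring_of_integers K = {x \<in> K. algebraic_integer x}"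

definition trace :: "('n::finite \<Rightarrow> real \<Rightarrow> real) \<Rightarrow> real \<Rightarrow> real" where
  "trace \<tau> x = (\<Sum>i\<in>UNIV. \<tau> i x)"

definition codifferent :: "real set \<Rightarrow> ('n::finite \<Rightarrow> real \<Rightarrow> real) \<Rightarrow> real set" where
  "codifferent K \<tau> = {\<delta> \<in> K. \<forall>\<alpha> \<in> ring_of_integers K. trace \<tau> (\<delta> * \<alpha>) \<in> \<int>}"

definition minkowski :: "('n::finite \<Rightarrow> real \<Rightarrow> real) \<Rightarrow> real \<Rightarrow> real ^ 'n" where
  "minkowski \<tau> \<alpha> = (\<chi> i. \<tau> i \<alpha>)"

definition minkowski_lattice :: "real set \<Rightarrow> ('n::finite \<Rightarrow> real \<Rightarrow> real) \<Rightarrow> (real ^ 'n) set" where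
  "minkowski_lattice K \<tau> = minkowski \<tau> ` ring_of_integers K"

definition integer_plane :: "('a::real_vector) set \<Rightarrow> 'a set \<Rightarrow> bool" where
  "integer_plane \<Lambda> A \<longleftrightarrow> affine A \<and> A \<noteq> {} \<and> affine hull (A \<inter> \<Lambda>) = A"

definition zspan :: "('a::ab_group_add) set \<Rightarrow> 'a set" where
  "zspan S = \<Inter>{G. S \<subseteq> G \<and> 0 \<in> G \<and> (\<forall>x\<in>G. \<forall>y\<in>G. x - y \<in> G)}"

text \<open>Index of a subgroup H in a group L (number of cosets; 0 if infinite).\<close>
definition group_index :: "('a::ab_group_add) set \<Rightarrow> 'a set \<Rightarrow> nat" where
  "group_index L H = card ((\<lambda>x. (\<lambda>h. x + h) ` H) ` L)"

definition integer_distance :: "('a::real_vector) set \<Rightarrow> 'a set \<Rightarrow> nat" where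
  "integer_distance \<Lambda> A = group_index (\<Lambda> \<inter> span A) (zspan (A \<inter> \<Lambda>))"

end

theory Submission
  imports Defs Jordan_Normal_Form.Char_Poly "HOL-Computational_Algebra.Group_Closure"
begin

text \<open>
  The linear form \<open>f x = (\<Sum>i. \<tau>\<^sub>i(\<delta>) x\<^sub>i)\<close> takes integer values on \<open>\<Lambda>\<close>, because
  \<open>f (\<iota>\<^sub>M \<alpha>) = Tr(\<delta>\<alpha>)\<close>, and the constant value \<open>k\<close> on \<open>A\<close>. Let \<open>L = \<Lambda> \<inter> span A\<close> and
  let \<open>H\<close> be the group generated by \<open>A \<inter> \<Lambda>\<close>. Since \<open>k \<noteq> 0\<close>, \<open>A\<close> does not pass through the
  origin, so a vector of \<open>L\<close> killed by \<open>f\<close> moves a lattice point of \<open>A\<close> to another one;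
  hence \<open>H = {x \<in> L. f x \<in> k\<int>}\<close>. As \<open>f L = d\<int>\<close> for some \<open>d > 0\<close> dividing \<open>k\<close>, the index of
  \<open>H\<close> in \<open>L\<close> is that of \<open>k\<int>\<close> in \<open>d\<int>\<close>, namely \<open>k/d\<close>.

  The only arithmetic input is that \<open>\<O>\<^sub>K\<close> is an additive group, i.e. that algebraic
  integers are closed under addition; this is proved by the classical argument that
  \<open>x + y\<close> is an eigenvalue of an integer matrix.
\<close>


section \<open>Closure of algebraic integers under addition\<close>

lemma sum_in_group_closure:
  "(\<And>i. i \<in> I \<Longrightarrow> g i \<in> group_closure S) \<Longrightarrow> sum g I \<in> group_closure S"
  by (induction I rule: infinite_finite_induct) (auto intro: group_closure_add)

lemma group_closure_of_int_mult:
  fixes s :: "'a::comm_ring_1"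
  assumes "s \<in> group_closure S"
  shows "of_int m * s \<in> group_closure S"
  using assms by (cases m rule: int_cases2) (auto intro: group_closure_scalar_mult_left)

lemma group_closure_finite_int_combination:
  fixes x :: "'a::comm_ring_1"
  assumes "finite S" "x \<in> group_closure S"
  shows "\<exists>c. x = (\<Sum>s\<in>S. of_int (c s) * s)"
  using assms(2)
proof induction
  case (base x)
  show ?case
  proof (cases "x = 0")
    case True
    then show ?thesis by (auto intro: exI[of _ "\<lambda>_. 0"])
  next
    case False
    have "(\<Sum>s\<in>S. of_int (if s = x then 1 else 0) * s) = (\<Sum>s\<in>S. if s = x then s else 0)"
      by (rule sum.cong) auto
    with base False assms(1) have "x = (\<Sum>s\<in>S. of_int (if s = x then 1 else 0) * s)"
      by simp
    then show ?thesis by (intro exI[of _ "\<lambda>s. if s = x then 1 else 0"])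
  qed
next
  case (diff s t)
  then obtain c c' where "s = (\<Sum>s\<in>S. of_int (c s) * s)" "t = (\<Sum>s\<in>S. of_int (c' s) * s)"
    by blast
  then have "s - t = (\<Sum>s\<in>S. of_int (c s - c' s) * s)"
    by (simp add: sum_subtractf left_diff_distrib)
  then show ?case by (intro exI[of _ "\<lambda>s. c s - c' s"])
qed

lemma group_closure_mult_closed:
  fixes z :: "'a::comm_ring_1"
  assumes "\<And>f. f \<in> F \<Longrightarrow> z * f \<in> group_closure F" "s \<in> group_closure F"
  shows "z * s \<in> group_closure F"
  using assms(2)
  by induction (auto simp: right_diff_distrib intro: assms(1) group_closure.diff)

lemma group_closure_mult:
  fixes s t :: "'a::comm_ring_1"
  assumes "s \<in> group_closure S" "t \<in> group_closure T"
  shows "s * t \<in> group_closure ((\<lambda>(x, y). x * y) ` (S \<times> T))"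
  using assms(1)
proof induction
  case (base s)
  show ?case
    using assms(2) base
    by induction (auto simp: right_diff_distrib intro: group_closure.base group_closure.diff)
next
  case (diff s s')
  then show ?case by (auto simp: left_diff_distrib intro: group_closure.diff)
qed

lemma algebraic_int_of_int_matrix_eigenvector:
  fixes z :: "'a::field_char_0" and b :: "nat \<Rightarrow> 'a" and M :: "nat \<Rightarrow> nat \<Rightarrow> int"
  assumes "i0 < N" "b i0 \<noteq> 0"
    and eigen: "\<And>i. i < N \<Longrightarrow> z * b i = (\<Sum>j<N. of_int (M i j) * b j)"
  shows "algebraic_int z"
proof -
  define Mi :: "int mat" where "Mi = mat N N (\<lambda>(i, j). M i j)"
  define Mr :: "'a mat" where "Mr = map_mat of_int Mi"
  define v where "v = vec N b"
  have Mi: "Mi \<in> carrier_mat N N" and Mr: "Mr \<in> carrier_mat N N"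
    by (simp_all add: Mi_def Mr_def)
  have "Mr *\<^sub>v v = z \<cdot>\<^sub>v v"
  proof (rule eq_vecI)
    fix i assume "i < dim_vec (z \<cdot>\<^sub>v v)"
    then have i: "i < N" by (simp add: v_def)
    have "(Mr *\<^sub>v v) $ i = (\<Sum>j\<in>{0..<N}. of_int (M i j) * b j)"
      using i by (simp add: Mr_def Mi_def v_def scalar_prod_def)
    also have "\<dots> = z * b i" by (simp add: eigen[OF i] atLeast0LessThan)
    finally show "(Mr *\<^sub>v v) $ i = (z \<cdot>\<^sub>v v) $ i" using i by (simp add: v_def)
  qed (simp add: Mr_def Mi_def v_def)
  moreover have "v \<noteq> 0\<^sub>v N"
    using assms(1,2) by (auto simp: v_def dest!: arg_cong[of _ _ "\<lambda>w. w $ i0"])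
  ultimately have "eigenvalue Mr z"
    using Mr unfolding eigenvalue_def eigenvector_def by (intro exI[of _ v]) (simp add: v_def)
  then have "poly (char_poly Mr) z = 0"
    using eigenvalue_root_char_poly[OF Mr] by simp
  moreover have "char_poly Mr = map_poly of_int (char_poly Mi)"
    unfolding Mr_def by (rule of_int_hom.char_poly_hom[OF Mi])
  moreover have "lead_coeff (char_poly Mi) = 1"
    using degree_monic_char_poly[OF Mi] by simp
  ultimately show ?thesis
    unfolding algebraic_int_altdef_ipoly by metis
qed

lemma algebraic_int_of_mult_closed:
  fixes z :: "'a::field_char_0"
  assumes "finite P" "p0 \<in> P" "p0 \<noteq> 0" "\<And>p. p \<in> P \<Longrightarrow> z * p \<in> group_closure P"
  shows "algebraic_int z"
proof -
  obtain b where b: "bij_betw b {0..<card P} P"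
    using ex_bij_betw_nat_finite[OF assms(1)] by blast
  have "\<forall>i\<in>{0..<card P}. \<exists>c. z * b i = (\<Sum>p\<in>P. of_int (c p) * p)"
    using assms(1,4) b group_closure_finite_int_combination by (metis bij_betwE)
  then obtain c where c: "\<And>i. i < card P \<Longrightarrow> z * b i = (\<Sum>p\<in>P. of_int (c i p) * p)"
    by (metis atLeastLessThan_iff bchoice zero_le)
  obtain i0 where i0: "i0 < card P" "b i0 = p0"
    using b assms(2) by (metis atLeastLessThan_iff bij_betw_iff_bijections)
  show ?thesis
  proof (rule algebraic_int_of_int_matrix_eigenvector[where M = "\<lambda>i j. c i (b j)" and ?i0.0 = i0])
    fix i assume "i < card P"
    then show "z * b i = (\<Sum>j<card P. of_int (c i (b j)) * b j)"
      using c sum.reindex_bij_betw[OF b, of "\<lambda>p. of_int (c i p) * p"]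
      by (simp add: atLeast0LessThan)
  qed (use assms(3) i0 in simp_all)
qed

lemma algebraic_int_powers_in_group_closure:
  fixes x :: "'a::field_char_0"
  assumes "algebraic_int x"
  obtains d where "d > 0" "\<And>n. x ^ n \<in> group_closure ((^) x ` {..<d})"
proof -
  obtain p :: "int poly" where p: "poly (map_poly of_int p) x = 0" "lead_coeff p = 1"
    using assms unfolding algebraic_int_altdef_ipoly by blast
  define d where "d = degree p"
  define F where "F = (^) x ` {..<d}"
  have "0 = (\<Sum>i\<le>d. of_int (coeff p i) * x ^ i)"
    using p(1) by (simp add: poly_altdef d_def)
  also have "\<dots> = (\<Sum>i<d. of_int (coeff p i) * x ^ i) + x ^ d"
    using p(2) by (simp add: lessThan_Suc_atMost[symmetric] d_def)
  finally have x_pow_d: "x ^ d = (\<Sum>i<d. of_int (- coeff p i) * x ^ i)"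
    by (simp add: sum_negf eq_neg_iff_add_eq_0 add.commute)
  then have "d > 0"
    by (cases d) simp_all
  have "x ^ d \<in> group_closure F"
    unfolding x_pow_d F_def
    by (intro sum_in_group_closure group_closure_of_int_mult group_closure.base) auto
  have "x * f \<in> group_closure F" if "f \<in> F" for f
  proof -
    from that obtain i where "i < d" "f = x ^ i"
      by (auto simp: F_def)
    moreover have "x ^ Suc i \<in> group_closure F" if "Suc i < d"
      using that unfolding F_def by (intro group_closure.base insertI2 imageI) simp
    ultimately show ?thesis
      using \<open>x ^ d \<in> group_closure F\<close> by (cases "Suc i = d") (simp_all flip: power_Suc)
  qed
  moreover have "1 \<in> group_closure F"
    using \<open>d > 0\<close> unfolding F_def
    by (intro group_closure.base insertI2 image_eqI[of _ _ 0]) simp_all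
  ultimately have "x ^ n \<in> group_closure F" for n
    by (induction n) (simp_all add: group_closure_mult_closed)
  with \<open>d > 0\<close> show thesis
    using that unfolding F_def by blast
qed

lemma algebraic_int_add:
  fixes x y :: "'a::field_char_0"
  assumes "algebraic_int x" "algebraic_int y"
  shows "algebraic_int (x + y)"
proof -
  obtain d where "d > 0" and x_pow: "\<And>n. x ^ n \<in> group_closure ((^) x ` {..<d})"
    using algebraic_int_powers_in_group_closure[OF assms(1)] by blast
  obtain e where "e > 0" and y_pow: "\<And>n. y ^ n \<in> group_closure ((^) y ` {..<e})"
    using algebraic_int_powers_in_group_closure[OF assms(2)] by blast
  define P where "P = (\<lambda>(u, v). u * v) ` ((^) x ` {..<d} \<times> (^) y ` {..<e})"
  have monomial: "x ^ i * y ^ j \<in> group_closure P" for i j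
    unfolding P_def using x_pow y_pow by (rule group_closure_mult)
  show ?thesis
  proof (rule algebraic_int_of_mult_closed)
    show "finite P" by (simp add: P_def)
    show "x ^ 0 * y ^ 0 \<in> P"
      using \<open>d > 0\<close> \<open>e > 0\<close> unfolding P_def by blast
  next
    fix q assume "q \<in> P"
    then obtain i j where "q = x ^ i * y ^ j"
      by (auto simp: P_def)
    then have "(x + y) * q = x ^ Suc i * y ^ j + x ^ i * y ^ Suc j"
      by (simp add: algebra_simps)
    then show "(x + y) * q \<in> group_closure P"
      by (simp only:) (intro group_closure_add monomial)
  qed simp
qed

lemma algebraic_int_diff:
  "algebraic_int x \<Longrightarrow> algebraic_int y \<Longrightarrow> algebraic_int (x - y :: 'a::field_char_0)"
  using algebraic_int_add[of x "- y"] by simp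

section \<open>Additive subgroups and their cosets\<close>

definition additive_subgroup :: "'a::ab_group_add set \<Rightarrow> bool" where
  "additive_subgroup G \<longleftrightarrow> 0 \<in> G \<and> (\<forall>x\<in>G. \<forall>y\<in>G. x - y \<in> G)"

lemma additive_subgroup_diff: "additive_subgroup G \<Longrightarrow> x \<in> G \<Longrightarrow> y \<in> G \<Longrightarrow> x - y \<in> G"
  unfolding additive_subgroup_def by blast

lemma additive_subgroup_add: "additive_subgroup G \<Longrightarrow> x \<in> G \<Longrightarrow> y \<in> G \<Longrightarrow> x + y \<in> G"
  unfolding additive_subgroup_def by (metis diff_0 diff_minus_eq_add)

lemma additive_subgroup_scaleR_of_int:
  fixes x :: "'a::real_vector"
  assumes "additive_subgroup G" "x \<in> G"
  shows "of_int m *\<^sub>R x \<in> G"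
proof (induction m rule: int_induct[where k = 0])
  case base
  then show ?case using assms(1) by (simp add: additive_subgroup_def)
next
  case (step1 m)
  then show ?case using additive_subgroup_add[OF assms(1) _ assms(2)] by (simp add: scaleR_add_left)
next
  case (step2 m)
  then show ?case using additive_subgroup_diff[OF assms(1) _ assms(2)] by (simp add: scaleR_diff_left)
qed

lemma additive_subgroup_Int:
  "additive_subgroup G \<Longrightarrow> additive_subgroup H \<Longrightarrow> additive_subgroup (G \<inter> H)"
  unfolding additive_subgroup_def by blast

lemma subspace_imp_additive_subgroup: "subspace S \<Longrightarrow> additive_subgroup S"
  unfolding additive_subgroup_def by (simp add: subspace_0 subspace_diff)

lemma additive_subgroup_Int_span: "additive_subgroup G \<Longrightarrow> additive_subgroup (G \<inter> span S)"
  by (simp add: additive_subgroup_Int subspace_imp_additive_subgroup)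

lemma additive_subgroup_zspan: "additive_subgroup (zspan S)"
  unfolding additive_subgroup_def zspan_def by blast

lemma zspan_superset: "S \<subseteq> zspan S"
  unfolding zspan_def by blast

lemma zspan_least: "S \<subseteq> G \<Longrightarrow> additive_subgroup G \<Longrightarrow> zspan S \<subseteq> G"
  unfolding zspan_def additive_subgroup_def by blast

lemma additive_subgroup_int_eq_multiples:
  fixes G :: "int set"
  assumes "additive_subgroup G"
  shows "G = range ((*) (Gcd G))"
proof -
  have "group_closure G \<subseteq> G"
  proof
    fix s assume "s \<in> group_closure G"
    then show "s \<in> G"
      by induction (use assms in \<open>auto simp: additive_subgroup_def\<close>)
  qed
  then have "group_closure G = G"
    by (auto intro: group_closure.base)
  then show ?thesis
    using group_closure_eq[of G] by simp
qed

lemma coset_eq_iff: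
  assumes "additive_subgroup H"
  shows "(+) x ` H = (+) y ` H \<longleftrightarrow> x - y \<in> H"
proof
  assume "(+) x ` H = (+) y ` H"
  moreover have "x \<in> (+) x ` H"
    using assms by (auto simp: additive_subgroup_def intro: image_eqI[of _ _ 0])
  ultimately obtain h where "h \<in> H" "x = y + h"
    by auto
  then show "x - y \<in> H" by simp
next
  assume xy: "x - y \<in> H"
  have "(+) u ` H \<subseteq> (+) v ` H" if "u - v \<in> H" for u v
  proof
    fix z assume "z \<in> (+) u ` H"
    then obtain h where "h \<in> H" "z = v + ((u - v) + h)"
      by auto
    then show "z \<in> (+) v ` H"
      using additive_subgroup_add[OF assms that] by blast
  qed
  moreover have "y - x \<in> H"
    using additive_subgroup_diff[OF assms _ xy, of 0] assms by (simp add: additive_subgroup_def)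
  ultimately show "(+) x ` H = (+) y ` H"
    using xy by blast
qed

lemma additive_subgroup_level_multiples:
  fixes f :: "'a::real_vector \<Rightarrow> real"
  assumes "additive_subgroup L" "linear f"
  shows "additive_subgroup {x \<in> L. \<exists>m::int. f x = of_int m * c}"
  unfolding additive_subgroup_def
proof (intro conjI ballI)
  show "0 \<in> {x \<in> L. \<exists>m::int. f x = of_int m * c}"
    using assms by (auto simp: additive_subgroup_def linear_0 intro: exI[of _ 0])
next
  fix x y assume "x \<in> {x \<in> L. \<exists>m::int. f x = of_int m * c}" "y \<in> {x \<in> L. \<exists>m::int. f x = of_int m * c}"
  then obtain m m' :: int where "x \<in> L" "y \<in> L" "f x = of_int m * c" "f y = of_int m' * c"
    by blast
  then have "x - y \<in> L" "f (x - y) = of_int (m - m') * c"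
    using assms by (simp_all add: additive_subgroup_diff linear_diff left_diff_distrib)
  then show "x - y \<in> {x \<in> L. \<exists>m::int. f x = of_int m * c}"
    by blast
qed

lemma level_multiples_coset_eq_iff:
  fixes f :: "'a::real_vector \<Rightarrow> real" and L :: "'a set" and d :: real and n q r :: int
  defines "H \<equiv> {z \<in> L. \<exists>m::int. f z = of_int m * (of_int n * d)}"
  assumes L: "additive_subgroup L" and f: "linear f" and "d \<noteq> 0"
    and "x \<in> L" "y \<in> L" "f x = of_int q * d" "f y = of_int r * d"
  shows "(+) x ` H = (+) y ` H \<longleftrightarrow> n dvd q - r"
proof -
  have "f (x - y) = of_int (q - r) * d"
    using assms by (simp add: linear_diff algebra_simps)
  moreover have "of_int (q - r) * d = of_int m * (of_int n * d) \<longleftrightarrow> q - r = m * n" for m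
    using \<open>d \<noteq> 0\<close> by (metis mult.assoc mult_cancel_right of_int_eq_iff of_int_mult)
  moreover have "x - y \<in> L"
    using L \<open>x \<in> L\<close> \<open>y \<in> L\<close> by (rule additive_subgroup_diff)
  ultimately have "x - y \<in> H \<longleftrightarrow> n dvd q - r"
    by (auto simp: H_def dvd_def mult.commute)
  then show ?thesis
    unfolding H_def using coset_eq_iff[OF additive_subgroup_level_multiples[OF L f]] by simp
qed

lemma group_index_level_multiples:
  fixes f :: "'a::real_vector \<Rightarrow> real" and n :: int
  assumes L: "additive_subgroup L" and f: "linear f"
    and x0: "x0 \<in> L" "f x0 = d" and "d \<noteq> 0"
    and f_multiples: "\<And>x. x \<in> L \<Longrightarrow> \<exists>q::int. f x = of_int q * d"
    and "n > 0"
  shows "group_index L {x \<in> L. \<exists>m::int. f x = of_int m * (of_int n * d)} = nat n"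
proof -
  define H where "H = {x \<in> L. \<exists>m::int. f x = of_int m * (of_int n * d)}"
  note coset_eq_iff = level_multiples_coset_eq_iff[OF L f \<open>d \<noteq> 0\<close>, of _ _ _ _ n, folded H_def]
  have x0_multiple: "of_int i *\<^sub>R x0 \<in> L" "f (of_int i *\<^sub>R x0) = of_int i * d" for i
    using additive_subgroup_scaleR_of_int[OF L x0(1)] f x0(2) by (simp_all add: linear_scale)
  define \<phi> where "\<phi> i = (+) (of_int i *\<^sub>R x0) ` H" for i
  have "bij_betw \<phi> {0..<n} ((\<lambda>x. (+) x ` H) ` L)"
  proof (rule bij_betw_imageI)
    show "inj_on \<phi> {0..<n}"
    proof (rule inj_onI)
      fix i j assume "i \<in> {0..<n}" "j \<in> {0..<n}" "\<phi> i = \<phi> j"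
      then have "n dvd i - j"
        using coset_eq_iff[OF x0_multiple(1) x0_multiple(1) x0_multiple(2) x0_multiple(2)]
        by (simp add: \<phi>_def)
      with \<open>i \<in> {0..<n}\<close> \<open>j \<in> {0..<n}\<close> show "i = j"
        by (metis atLeastLessThan_iff mod_eq_dvd_iff mod_pos_pos_trivial)
    qed
  next
    show "\<phi> ` {0..<n} = (\<lambda>x. (+) x ` H) ` L"
    proof (intro equalityI subsetI)
      fix c assume "c \<in> (\<lambda>x. (+) x ` H) ` L"
      then obtain x q where x: "x \<in> L" "c = (+) x ` H" "f x = of_int q * d"
        using f_multiples by blast
      then have "c = \<phi> (q mod n)"
        using coset_eq_iff[OF x(1) x0_multiple(1) x(3) x0_multiple(2)]
        by (simp add: \<phi>_def mod_eq_dvd_iff[symmetric])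
      then show "c \<in> \<phi> ` {0..<n}"
        using \<open>n > 0\<close> by auto
    qed (use x0_multiple in \<open>auto simp: \<phi>_def\<close>)
  qed
  then show ?thesis
    unfolding group_index_def H_def[symmetric] by (simp add: bij_betw_same_card[symmetric])
qed

section \<open>Integer planes on a level set of an integral linear form\<close>

lemma affine_add_span_kernel:
  fixes f :: "'a::real_vector \<Rightarrow> real"
  assumes A: "affine A" and "a \<in> A" and f: "linear f" and level: "\<And>y. y \<in> A \<Longrightarrow> f y = k"
    and "k \<noteq> 0" and "w \<in> span A" and "f w = 0"
  shows "a + w \<in> A"
proof -
  define S where "S = (\<lambda>x. x - a) ` A"
  have S: "subspace S"
    unfolding S_def using A \<open>a \<in> A\<close> by (rule affine_diffs_subspace_subtract)
  have "A \<subseteq> span (insert a S)"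
  proof
    fix y assume "y \<in> A"
    then have "y - 1 *\<^sub>R a \<in> span S"
      unfolding S_def by (auto intro: span_base)
    then show "y \<in> span (insert a S)"
      unfolding span_insert by blast
  qed
  then have "span A \<subseteq> span (insert a S)"
    by (rule span_minimal) (rule subspace_span)
  then obtain c where "w - c *\<^sub>R a \<in> span S"
    using \<open>w \<in> span A\<close> unfolding span_insert by blast
  moreover have "span S = S"
    using S by (simp add: span_eq_iff)
  ultimately have "w - c *\<^sub>R a \<in> S"
    by simp
  then obtain y where y: "y \<in> A" "w - c *\<^sub>R a = y - a"
    unfolding S_def by blast
  then have "f (w - c *\<^sub>R a) = f (y - a)"
    by simp
  then have "c * k = 0"
    using f level[OF y(1)] level[OF \<open>a \<in> A\<close>] \<open>f w = 0\<close> by (simp add: linear_diff linear_scale)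
  with \<open>k \<noteq> 0\<close> y show ?thesis
    by (simp add: algebra_simps)
qed

lemma integer_plane_meets_lattice: "integer_plane \<Lambda> A \<Longrightarrow> A \<inter> \<Lambda> \<noteq> {}"
  unfolding integer_plane_def by (metis affine_hull_empty)

lemma zspan_plane_points_eq_level_multiples:
  fixes f :: "'a::real_vector \<Rightarrow> real"
  assumes \<Lambda>: "additive_subgroup \<Lambda>" and f: "linear f" and A: "integer_plane \<Lambda> A"
    and level: "A \<subseteq> {x. f x = k}" and "k \<noteq> 0"
  shows "zspan (A \<inter> \<Lambda>) = {x \<in> \<Lambda> \<inter> span A. \<exists>m::int. f x = of_int m * k}"
    (is "_ = ?M")
proof
  have "additive_subgroup (\<Lambda> \<inter> span A)"
    using \<Lambda> by (rule additive_subgroup_Int_span)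
  then have "additive_subgroup ?M"
    using f by (rule additive_subgroup_level_multiples)
  moreover have "A \<inter> \<Lambda> \<subseteq> ?M"
  proof
    fix y assume "y \<in> A \<inter> \<Lambda>"
    moreover have "f y = of_int 1 * k"
      using level \<open>y \<in> A \<inter> \<Lambda>\<close> by auto
    ultimately show "y \<in> ?M"
      using span_base[of y A] by blast
  qed
  ultimately show "zspan (A \<inter> \<Lambda>) \<subseteq> ?M"
    by (simp add: zspan_least)
next
  have "affine A"
    using A by (simp add: integer_plane_def)
  obtain a where a: "a \<in> A" "a \<in> \<Lambda>"
    using integer_plane_meets_lattice[OF A] by blast
  then have a_zspan: "a \<in> zspan (A \<inter> \<Lambda>)"
    by (intro subsetD[OF zspan_superset] IntI)
  have "f a = k"
    using subsetD[OF level a(1)] by simp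
  show "?M \<subseteq> zspan (A \<inter> \<Lambda>)"
  proof
    fix x assume "x \<in> ?M"
    then obtain m :: int where x: "x \<in> \<Lambda>" "x \<in> span A" "f x = of_int m * k"
      by blast
    define w where "w = x - of_int m *\<^sub>R a"
    have "w \<in> \<Lambda>"
      unfolding w_def using \<Lambda> x(1) a(2)
      by (intro additive_subgroup_diff additive_subgroup_scaleR_of_int)
    moreover have "a + w \<in> A"
    proof (rule affine_add_span_kernel[OF \<open>affine A\<close> a(1) f _ \<open>k \<noteq> 0\<close>])
      show "w \<in> span A"
        unfolding w_def using x(2) span_base[OF a(1)] by (intro span_diff span_scale)
      show "f w = 0"
        unfolding w_def using x(3) \<open>f a = k\<close> f by (simp add: linear_diff linear_scale)
    qed (use level in blast)
    ultimately have "a + w \<in> zspan (A \<inter> \<Lambda>)"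
      using additive_subgroup_add[OF \<Lambda> a(2)] by (intro subsetD[OF zspan_superset] IntI)
    then have "w \<in> zspan (A \<inter> \<Lambda>)"
      using additive_subgroup_diff[OF additive_subgroup_zspan _ a_zspan, of "a + w"] by simp
    then have "w + of_int m *\<^sub>R a \<in> zspan (A \<inter> \<Lambda>)"
      using a_zspan by (intro additive_subgroup_add additive_subgroup_scaleR_of_int additive_subgroup_zspan)
    then show "x \<in> zspan (A \<inter> \<Lambda>)"
      by (simp add: w_def)
  qed
qed

lemma integral_linear_image_eq_multiples:
  fixes f :: "'a::real_vector \<Rightarrow> real"
  assumes L: "additive_subgroup L" and f: "linear f" and f_Ints: "\<And>x. x \<in> L \<Longrightarrow> f x \<in> \<int>"
  obtains d :: int where "d \<ge> 0" "f ` L = range (\<lambda>q. of_int (d * q))"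
proof -
  define G where "G = {t::int. of_int t \<in> f ` L}"
  have "additive_subgroup G"
    unfolding additive_subgroup_def G_def
  proof (intro conjI ballI)
    show "0 \<in> {t::int. of_int t \<in> f ` L}"
      using L linear_0[OF f] unfolding additive_subgroup_def by force
  next
    fix s t assume "s \<in> {t::int. of_int t \<in> f ` L}" "t \<in> {t::int. of_int t \<in> f ` L}"
    then obtain x y where "x \<in> L" "y \<in> L" "f x = of_int s" "f y = of_int t"
      by auto
    moreover from this have "x - y \<in> L"
      using L by (simp add: additive_subgroup_diff)
    ultimately show "s - t \<in> {t::int. of_int t \<in> f ` L}"
      using f by (auto simp: linear_diff intro!: image_eqI[of _ _ "x - y"])
  qed
  then have "G = range ((*) (Gcd G))"
    by (rule additive_subgroup_int_eq_multiples)
  moreover have "f ` L = of_int ` G"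
  proof
    show "f ` L \<subseteq> of_int ` G"
    proof
      fix y assume "y \<in> f ` L"
      moreover from this obtain t where "y = of_int t"
        using f_Ints by (auto elim: Ints_cases)
      ultimately show "y \<in> of_int ` G"
        by (simp add: G_def)
    qed
  qed (auto simp: G_def)
  ultimately have "f ` L = range (\<lambda>q. of_int (Gcd G * q))"
    by (metis image_image)
  then show thesis
    using that[of "Gcd G"] by simp
qed

lemma integer_distance_divides_level:
  fixes f :: "'a::real_vector \<Rightarrow> real"
  assumes \<Lambda>: "additive_subgroup \<Lambda>" and f: "linear f" and f_Ints: "\<And>x. x \<in> \<Lambda> \<Longrightarrow> f x \<in> \<int>"
    and A: "integer_plane \<Lambda> A" and level: "A \<subseteq> {x. f x = k}" and "k > 0"
  shows "\<exists>d::int. d > 0 \<and> k = real (integer_distance \<Lambda> A) * of_int d"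
proof -
  define L where "L = \<Lambda> \<inter> span A"
  have L: "additive_subgroup L"
    unfolding L_def using \<Lambda> by (rule additive_subgroup_Int_span)
  obtain d :: int where "d \<ge> 0" and fL: "f ` L = range (\<lambda>q. of_int (d * q))"
    using integral_linear_image_eq_multiples[OF L f] f_Ints by (auto simp: L_def)
  obtain a where "a \<in> A" "a \<in> \<Lambda>"
    using integer_plane_meets_lattice[OF A] by blast
  then have "k \<in> f ` L"
    using level by (force simp: L_def intro: span_base)
  then obtain n where k: "k = of_int (d * n)"
    using fL by auto
  with \<open>k > 0\<close> \<open>d \<ge> 0\<close> have "d > 0" "n > 0"
    by (auto simp: zero_less_mult_iff)
  have "of_int d \<in> f ` L"
    using fL by (metis mult.right_neutral rangeI)
  then obtain x0 where "x0 \<in> L" "f x0 = of_int d"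
    by auto
  have f_multiples: "\<exists>q::int. f x = of_int q * of_int d" if "x \<in> L" for x
    using fL that by (force simp: mult.commute)
  have "integer_distance \<Lambda> A = group_index L {x \<in> L. \<exists>m::int. f x = of_int m * k}"
    unfolding integer_distance_def L_def
    using zspan_plane_points_eq_level_multiples[OF \<Lambda> f A level] \<open>k > 0\<close> by simp
  also have "\<dots> = nat n"
    using group_index_level_multiples[OF L f \<open>x0 \<in> L\<close> \<open>f x0 = of_int d\<close> _ f_multiples \<open>n > 0\<close>]
      \<open>d > 0\<close> k by (simp add: mult.commute)
  finally show ?thesis
    using k \<open>d > 0\<close> \<open>n > 0\<close> by auto
qed

section \<open>The Minkowski lattice and the codifferent\<close>

lemma algebraic_integer_iff_algebraic_int: "algebraic_integer x \<longleftrightarrow> algebraic_int x"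
  unfolding algebraic_integer_def algebraic_int_altdef_ipoly by auto

lemma subfield_real_diff: "subfield_real K \<Longrightarrow> x \<in> K \<Longrightarrow> y \<in> K \<Longrightarrow> x - y \<in> K"
  unfolding subfield_real_def by (metis diff_conv_add_uminus)

lemma field_embedding_diff:
  assumes "subfield_real K" "field_embedding K \<sigma>" "x \<in> K" "y \<in> K"
  shows "\<sigma> (x - y) = \<sigma> x - \<sigma> y"
proof -
  have "\<sigma> (x - y) + \<sigma> y = \<sigma> x"
    using assms subfield_real_diff[OF assms(1,3,4)] unfolding field_embedding_def
    by (metis diff_add_cancel)
  then show ?thesis
    by (simp add: eq_diff_eq)
qed

lemma ring_of_integers_diff:
  "subfield_real K \<Longrightarrow> x \<in> ring_of_integers K \<Longrightarrow> y \<in> ring_of_integers K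
    \<Longrightarrow> x - y \<in> ring_of_integers K"
  by (simp add: ring_of_integers_def algebraic_integer_iff_algebraic_int subfield_real_diff
      algebraic_int_diff)

lemma additive_subgroup_minkowski_lattice:
  assumes K: "subfield_real K" and \<tau>: "\<And>i. field_embedding K (\<tau> i)"
  shows "additive_subgroup (minkowski_lattice K \<tau>)"
proof -
  have diff: "minkowski \<tau> x - minkowski \<tau> y = minkowski \<tau> (x - y)" if "x \<in> K" "y \<in> K" for x y
    using field_embedding_diff[OF K \<tau> that] by (simp add: minkowski_def Finite_Cartesian_Product.vec_eq_iff)
  have "0 \<in> K"
    using K by (simp add: subfield_real_def)
  then have "0 \<in> ring_of_integers K" "minkowski \<tau> 0 = 0"
    using diff[of 0 0] by (simp_all add: ring_of_integers_def algebraic_integer_iff_algebraic_int)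
  then have "0 \<in> minkowski_lattice K \<tau>"
    unfolding minkowski_lattice_def by (metis image_eqI)
  moreover have "x - y \<in> minkowski_lattice K \<tau>"
    if "x \<in> minkowski_lattice K \<tau>" "y \<in> minkowski_lattice K \<tau>" for x y
    using that diff ring_of_integers_diff[OF K]
    by (auto simp: minkowski_lattice_def ring_of_integers_def)
  ultimately show ?thesis
    by (simp add: additive_subgroup_def)
qed

lemma codifferent_pairing_Ints:
  fixes \<tau> :: "'n::finite \<Rightarrow> real \<Rightarrow> real" and x :: "real ^ 'n"
  assumes "\<And>i. field_embedding K (\<tau> i)" "\<delta> \<in> codifferent K \<tau>" "x \<in> minkowski_lattice K \<tau>"
  shows "(\<Sum>i\<in>UNIV. \<tau> i \<delta> * x $ i) \<in> \<int>"
proof -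
  obtain \<alpha> where \<alpha>: "\<alpha> \<in> ring_of_integers K" "x = minkowski \<tau> \<alpha>"
    using assms(3) by (auto simp: minkowski_lattice_def)
  then have "(\<Sum>i\<in>UNIV. \<tau> i \<delta> * x $ i) = trace \<tau> (\<delta> * \<alpha>)"
    using assms(1,2)
    by (simp add: trace_def minkowski_def codifferent_def ring_of_integers_def field_embedding_def)
  then show ?thesis
    using assms(2) \<alpha>(1) by (simp add: codifferent_def)
qed

theorem corollary2p2:
  fixes K :: "real set" and \<tau> :: "'n::finite \<Rightarrow> real \<Rightarrow> real"
    and A :: "(real ^ 'n) set" and \<delta> k :: real
  assumes "number_field K CARD('n)"
    and "totally_real K"
    and "real_embeddings_enum K \<tau>"
    and "integer_plane (minkowski_lattice K \<tau>) A"
    and "\<delta> \<in> codifferent K \<tau>"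
    and "k > 0"
    and "A \<subseteq> {x. (\<Sum>i\<in>UNIV. \<tau> i \<delta> * x $ i) = k}"
  shows "(\<exists>m::int. k = real (integer_distance (minkowski_lattice K \<tau>) A) * of_int m)
    \<and> (k = 1 \<longrightarrow> integer_distance (minkowski_lattice K \<tau>) A = 1)"
proof -
  have K: "subfield_real K"
    using assms(1) by (simp add: number_field_def)
  have \<tau>: "\<And>i. field_embedding K (\<tau> i)"
    using assms(3) by (simp add: real_embeddings_enum_def)
  have "linear (\<lambda>x::real^'n. \<Sum>i\<in>UNIV. \<tau> i \<delta> * x $ i)"
    by (rule linearI) (simp_all add: sum.distrib sum_distrib_left algebra_simps)
  then obtain d :: int where "d > 0"
    and k: "k = real (integer_distance (minkowski_lattice K \<tau>) A) * of_int d"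
    using integer_distance_divides_level[OF additive_subgroup_minkowski_lattice[OF K \<tau>] _
        codifferent_pairing_Ints[OF \<tau> assms(5)] assms(4,7,6)]
    by blast
  moreover have "integer_distance (minkowski_lattice K \<tau>) A = 1" if "k = 1"
  proof -
    have "int (integer_distance (minkowski_lattice K \<tau>) A) * d = 1"
      using k that by (metis of_int_eq_1_iff of_int_mult of_int_of_nat_eq)
    then show ?thesis
      by (simp add: zmult_eq_1_iff)
  qed
  ultimately show ?thesis
    by blast
qed

end
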